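(* Let $(X,\rho,\mu)$ be a $K$-doubling metric measure space and $x\in X$. The following are equivalent: (i) $x$ is an isolated point of $X$ for the metric topology of $\rho$; (ii) $x$ is an isolated point of $X$ for the $\mu$-topology; (iii) $\mu(\{x\})>0$.
   Context: A $K$-doubling metric measure space ($K>0$) is a triple $(X,\rho,\mu)$ where $(X,\rho)$ is a complete separable metric space and $\mu$ is a Borel-regular outer measure on $X$ with $0<\mu(B_{2r}(x))\le K\mu(B_r(x))<+\infty$ for all $x\in X$, $r>0$. A point $x\in E\subseteq X$ is a $\mu$-interior point of $E$ if there is a Borel set $B\subseteq E$ with $\lim_{r\to0^+}\mu(B_r(x)\setminus B)/\mu(B_r(x))=0$; in that case $E$ is called a $\mu$-neighborhood of $x$. The $\mu$-topology is the topology on $X$ whose open sets are the sets that are $\mu$-neighborhoods of each of their points. A point $x$ is $\mu$-isolated if $\{x\}$ is a $\mu$-neighborhood of $x$. *)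

theory Defs
  imports "HOL-Analysis.Analysis"
begin

text \<open>The metric space (X, rho) is the whole type 'a, a complete separable metric space
(class metric_space with complete_space and second_countable_topology).\<close>

definition outer_measure :: "('a set \<Rightarrow> ennreal) \<Rightarrow> bool" where
  "outer_measure \<mu> \<longleftrightarrow> \<mu> {} = 0 \<and> (\<forall>A B. A \<subseteq> B \<longrightarrow> \<mu> A \<le> \<mu> B)
     \<and> (\<forall>A :: nat \<Rightarrow> 'a set. \<mu> (\<Union>n. A n) \<le> (\<Sum>n. \<mu> (A n)))"

definition caratheodory_measurable :: "('a set \<Rightarrow> ennreal) \<Rightarrow> 'a set \<Rightarrow> bool" where
  "caratheodory_measurable \<mu> E \<longleftrightarrow> (\<forall>A. \<mu> A = \<mu> (A \<inter> E) + \<mu> (A - E))"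

definition borel_regular_outer_measure :: "('a::topological_space set \<Rightarrow> ennreal) \<Rightarrow> bool" where
  "borel_regular_outer_measure \<mu> \<longleftrightarrow> outer_measure \<mu>
     \<and> (\<forall>B \<in> sets borel. caratheodory_measurable \<mu> B)
     \<and> (\<forall>A. \<exists>B \<in> sets borel. A \<subseteq> B \<and> \<mu> B = \<mu> A)"

definition doubling :: "real \<Rightarrow> ('a::metric_space set \<Rightarrow> ennreal) \<Rightarrow> bool" where
  "doubling K \<mu> \<longleftrightarrow> K > 0 \<and> (\<forall>x r. r > 0 \<longrightarrow>
      0 < \<mu> (ball x (2 * r)) \<and> \<mu> (ball x (2 * r)) \<le> ennreal K * \<mu> (ball x r)
      \<and> \<mu> (ball x r) < \<infinity>)"

definition K_doubling_mms :: "real \<Rightarrow> ('a::{metric_space, complete_space, second_countable_topology} set \<Rightarrow> ennreal) \<Rightarrow> bool" where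
  "K_doubling_mms K \<mu> \<longleftrightarrow> borel_regular_outer_measure \<mu> \<and> doubling K \<mu>"

definition mu_nbhd :: "('a::metric_space set \<Rightarrow> ennreal) \<Rightarrow> 'a set \<Rightarrow> 'a \<Rightarrow> bool" where
  "mu_nbhd \<mu> E x \<longleftrightarrow> x \<in> E \<and> (\<exists>B \<in> sets borel. B \<subseteq> E \<and>
      ((\<lambda>r. \<mu> (ball x r - B) / \<mu> (ball x r)) \<longlongrightarrow> 0) (at_right 0))"

definition mu_open :: "('a::metric_space set \<Rightarrow> ennreal) \<Rightarrow> 'a set \<Rightarrow> bool" where
  "mu_open \<mu> U \<longleftrightarrow> (\<forall>x \<in> U. mu_nbhd \<mu> U x)"

end

theory Submission
  imports Defs
begin

text \<open>A metrically isolated point has a punctured ball of measure zero around it. Conversely, if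
\<open>\<mu>{x} = 0\<close> then \<open>\<mu>(B(x,r) - {x}) = \<mu>(B(x,r))\<close>, a positive finite number, so the density of
\<open>{x}\<close> at \<open>x\<close> is not \<open>1\<close> and \<open>x\<close> is not \<open>\<mu>\<close>-isolated. The substance
is that an atom is metrically isolated. If not, pick \<open>y\<close> at distance \<open>s < t/2\<close> from \<open>x\<close>; doubling
twice gives \<open>\<mu>{x} \<le> \<mu>(B(y,2s)) \<le> K\<^sup>2 \<mu>(B(y,s/2))\<close>, and \<open>B(y,s/2)\<close> is disjoint from
\<open>B(x,s/2) \<subseteq> B(x,t)\<close>. Iterating inside \<open>B(x,s/2)\<close> packs arbitrarily many disjoint balls of
measure at least \<open>\<mu>{x}/K\<^sup>2\<close> into \<open>B(x,t)\<close>, whose measure is finite, so \<open>\<mu>{x} = 0\<close>.\<close>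

lemma ennreal_eq_0_if_multiples_bounded:
  fixes a c :: ennreal
  assumes multiples: "\<And>N. of_nat N * a \<le> c" and "c < top"
  shows "a = 0"
proof (rule ccontr)
  assume "a \<noteq> 0"
  have "a < top"
    using multiples[of 1] \<open>c < top\<close> by simp
  have "c / a < top"
    using \<open>a \<noteq> 0\<close> \<open>c < top\<close> by (simp add: ennreal_divide_eq_top_iff less_top[symmetric])
  then obtain N where "c / a < of_nat N"
    using ennreal_Ex_less_of_nat by blast
  then have "c < of_nat N * a"
    using divide_less_ennreal \<open>a \<noteq> 0\<close> \<open>a < top\<close> by auto
  then show False
    using multiples[of N] by simp
qed

lemma outer_measure_empty_eq_0: "outer_measure \<mu> \<Longrightarrow> \<mu> {} = 0"
  unfolding outer_measure_def by blast

lemma outer_measure_mono: "outer_measure \<mu> \<Longrightarrow> A \<subseteq> B \<Longrightarrow> \<mu> A \<le> \<mu> B"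
  unfolding outer_measure_def by blast

lemma outer_measure_Un_le:
  assumes "outer_measure \<mu>"
  shows "\<mu> (A \<union> B) \<le> \<mu> A + \<mu> B"
proof -
  define C :: "nat \<Rightarrow> _" where "C n = (if n = 0 then A else if n = 1 then B else {})" for n
  have "(\<Union>n. C n) = A \<union> B"
    by (auto simp: C_def split: if_splits)
  moreover have "(\<Sum>n. \<mu> (C n)) = \<mu> A + \<mu> B"
    by (subst suminf_finite[of "{0, 1}"]) (auto simp: C_def outer_measure_empty_eq_0[OF assms])
  ultimately show ?thesis
    using assms unfolding outer_measure_def by metis
qed

lemma borel_regular_outer_measure_imp_outer_measure:
  "borel_regular_outer_measure \<mu> \<Longrightarrow> outer_measure \<mu>"
  unfolding borel_regular_outer_measure_def by blast

lemma borel_regular_outer_measure_split: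
  "borel_regular_outer_measure \<mu> \<Longrightarrow> B \<in> sets borel \<Longrightarrow> \<mu> A = \<mu> (A \<inter> B) + \<mu> (A - B)"
  unfolding borel_regular_outer_measure_def caratheodory_measurable_def by blast

lemma doubling_ball_pos: "doubling K \<mu> \<Longrightarrow> r > 0 \<Longrightarrow> 0 < \<mu> (ball x r)"
  unfolding doubling_def by (metis field_sum_of_halves half_gt_zero mult_2)

lemma doubling_ball_finite: "doubling K \<mu> \<Longrightarrow> r > 0 \<Longrightarrow> \<mu> (ball x r) < \<infinity>"
  unfolding doubling_def by blast

lemma doubling_ball_le: "doubling K \<mu> \<Longrightarrow> r > 0 \<Longrightarrow> \<mu> (ball x (2 * r)) \<le> ennreal K * \<mu> (ball x r)"
  unfolding doubling_def by blast

lemma mu_open_singleton_if_open: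
  fixes x :: "'a::metric_space"
  assumes "outer_measure \<mu>" and "open {x}"
  shows "mu_open \<mu> {x}"
proof -
  obtain e where "e > 0" and "ball x e \<subseteq> {x}"
    using \<open>open {x}\<close> open_contains_ball by blast
  moreover have "\<forall>\<^sub>F r in at_right (0::real). r < e"
    using \<open>e > 0\<close> eventually_at_right_field by blast
  ultimately have null_ratio: "\<forall>\<^sub>F r in at_right 0. \<mu> (ball x r - {x}) / \<mu> (ball x r) = 0"
  proof (elim eventually_mono)
    fix r assume "r < e"
    then have "ball x r - {x} = {}"
      using \<open>ball x e \<subseteq> {x}\<close> subset_ball[of r e x] by auto
    then show "\<mu> (ball x r - {x}) / \<mu> (ball x r) = 0"
      by (simp only: outer_measure_empty_eq_0[OF assms(1)] ennreal_zero_divide)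
  qed
  have "{x} \<in> sets borel"
    by (simp add: borel_closed)
  with null_ratio show ?thesis
    unfolding mu_open_def mu_nbhd_def by (blast intro: tendsto_eventually)
qed

lemma measure_singleton_pos_if_mu_open:
  fixes x :: "'a::metric_space"
  assumes "outer_measure \<mu>" and "doubling K \<mu>" and "mu_open \<mu> {x}"
  shows "\<mu> {x} > 0"
proof (rule ccontr)
  assume "\<not> \<mu> {x} > 0"
  then have atom_null: "\<mu> {x} = 0"
    by simp
  from \<open>mu_open \<mu> {x}\<close> obtain B where "B \<subseteq> {x}"
    and lim: "((\<lambda>r. \<mu> (ball x r - B) / \<mu> (ball x r)) \<longlongrightarrow> 0) (at_right 0)"
    unfolding mu_open_def mu_nbhd_def by auto
  have "\<forall>\<^sub>F r in at_right 0. r > 0 \<and> \<mu> (ball x r - B) / \<mu> (ball x r) < 1"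
    using eventually_conj[OF eventually_at_right_less order_tendstoD(2)[OF lim]] by simp
  then obtain r :: real where "r > 0" and ratio: "\<mu> (ball x r - B) / \<mu> (ball x r) < 1"
    using eventually_happens' trivial_limit_at_right_real by blast
  have "ball x r \<subseteq> {x} \<union> (ball x r - B)"
    using \<open>B \<subseteq> {x}\<close> by blast
  then have "\<mu> (ball x r) \<le> \<mu> ({x} \<union> (ball x r - B))"
    by (rule outer_measure_mono[OF assms(1)])
  also have "\<dots> \<le> \<mu> {x} + \<mu> (ball x r - B)"
    by (rule outer_measure_Un_le[OF assms(1)])
  finally have "\<mu> (ball x r) / \<mu> (ball x r) \<le> \<mu> (ball x r - B) / \<mu> (ball x r)"
    by (simp add: atom_null divide_right_mono_ennreal)
  moreover have "\<mu> (ball x r) / \<mu> (ball x r) = 1"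
    using doubling_ball_pos[OF assms(2) \<open>r > 0\<close>, of x] doubling_ball_finite[OF assms(2) \<open>r > 0\<close>, of x]
    by simp
  ultimately show False
    using ratio by simp
qed

lemma doubling_singleton_le_ball:
  fixes x y :: "'a::metric_space"
  assumes "outer_measure \<mu>" and "doubling K \<mu>" and "0 < dist y x"
  shows "\<mu> {x} \<le> ennreal K ^ 2 * \<mu> (ball y (dist y x / 2))"
proof -
  define s where "s = dist y x"
  have "\<mu> {x} \<le> \<mu> (ball y (2 * s))"
    using assms(3) by (intro outer_measure_mono[OF assms(1)]) (simp add: s_def)
  also have "\<dots> \<le> ennreal K * \<mu> (ball y s)"
    using assms(3) by (intro doubling_ball_le[OF assms(2)]) (simp add: s_def)
  also have "\<dots> \<le> ennreal K * (ennreal K * \<mu> (ball y (s / 2)))"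
    using doubling_ball_le[OF assms(2), of "s / 2" y] assms(3)
    by (intro mult_left_mono) (simp_all add: s_def)
  finally show ?thesis
    by (simp add: s_def power2_eq_square mult.assoc)
qed

lemma ball_subset_annulus:
  fixes x y :: "'a::metric_space"
  assumes "dist y x = 2 * r" and "3 * r \<le> t"
  shows "ball y r \<subseteq> ball x t - ball x r"
proof
  fix z assume "z \<in> ball y r"
  then have "dist y z < r"
    by simp
  moreover have "dist x z \<le> dist x y + dist y z"
    by (rule dist_triangle)
  moreover have "dist x y \<le> dist x z + dist y z"
    using dist_triangle[of x y z] by (simp add: dist_commute)
  ultimately show "z \<in> ball x t - ball x r"
    using assms by (simp add: dist_commute)
qed

lemma multiple_singleton_le_ball:
  fixes x :: "'a::metric_space"
  assumes "borel_regular_outer_measure \<mu>" and "doubling K \<mu>" and "x islimpt UNIV"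
  shows "t > 0 \<Longrightarrow> of_nat N * \<mu> {x} \<le> ennreal K ^ 2 * \<mu> (ball x t)"
proof (induction N arbitrary: t)
  case 0
  then show ?case
    by simp
next
  case (Suc N)
  have outer: "outer_measure \<mu>"
    using assms(1) by (rule borel_regular_outer_measure_imp_outer_measure)
  obtain y where "y \<noteq> x" and "dist y x < t / 2"
    using \<open>x islimpt UNIV\<close> \<open>t > 0\<close> unfolding islimpt_approachable by (metis UNIV_I half_gt_zero)
  define r where "r = dist y x / 2"
  have "r > 0" and "dist y x = 2 * r"
    using \<open>y \<noteq> x\<close> by (simp_all add: r_def)
  have "3 * r \<le> t"
    using \<open>dist y x < t / 2\<close> zero_le_dist[of y x] unfolding r_def by linarith
  have "\<mu> (ball x t) = \<mu> (ball x t \<inter> ball x r) + \<mu> (ball x t - ball x r)"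
    using assms(1) by (rule borel_regular_outer_measure_split) (simp add: borel_open)
  also have "ball x t \<inter> ball x r = ball x r"
    using \<open>3 * r \<le> t\<close> \<open>r > 0\<close> by (intro Int_absorb1 subset_ball) simp
  finally have disjoint_balls: "\<mu> (ball x r) + \<mu> (ball y r) \<le> \<mu> (ball x t)"
    using outer_measure_mono[OF outer ball_subset_annulus] \<open>dist y x = 2 * r\<close> \<open>3 * r \<le> t\<close>
    by (metis add_left_mono)
  have "of_nat (Suc N) * \<mu> {x} = of_nat N * \<mu> {x} + \<mu> {x}"
    by (simp add: algebra_simps)
  also have "\<dots> \<le> ennreal K ^ 2 * \<mu> (ball x r) + ennreal K ^ 2 * \<mu> (ball y r)"
    using Suc.IH[OF \<open>r > 0\<close>] doubling_singleton_le_ball[OF outer assms(2), of y x] \<open>r > 0\<close>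
    by (intro add_mono) (simp_all add: r_def)
  also have "\<dots> \<le> ennreal K ^ 2 * \<mu> (ball x t)"
    using disjoint_balls by (simp add: mult_left_mono flip: distrib_left)
  finally show ?case .
qed

lemma measure_singleton_eq_0_if_islimpt:
  fixes x :: "'a::metric_space"
  assumes "borel_regular_outer_measure \<mu>" and "doubling K \<mu>" and "x islimpt UNIV"
  shows "\<mu> {x} = 0"
proof (rule ennreal_eq_0_if_multiples_bounded)
  show "of_nat N * \<mu> {x} \<le> ennreal K ^ 2 * \<mu> (ball x 1)" for N
    using multiple_singleton_le_ball[OF assms] by simp
  show "ennreal K ^ 2 * \<mu> (ball x 1) < top"
    using doubling_ball_finite[OF assms(2), of 1 x] by (simp add: ennreal_mult_less_top power_less_top_ennreal)
qed

theorem proposition2p2: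
  fixes \<mu> :: "'a::{metric_space, complete_space, second_countable_topology} set \<Rightarrow> ennreal"
    and K :: real and x :: 'a
  assumes "K_doubling_mms K \<mu>"
  shows "(open {x} \<longleftrightarrow> mu_open \<mu> {x}) \<and> (mu_open \<mu> {x} \<longleftrightarrow> \<mu> {x} > 0)"
proof -
  have borel_regular: "borel_regular_outer_measure \<mu>" and doubling: "doubling K \<mu>"
    using assms unfolding K_doubling_mms_def by blast+
  have outer: "outer_measure \<mu>"
    using borel_regular by (rule borel_regular_outer_measure_imp_outer_measure)
  have "open {x} \<Longrightarrow> mu_open \<mu> {x}"
    by (rule mu_open_singleton_if_open[OF outer])
  moreover have "mu_open \<mu> {x} \<Longrightarrow> \<mu> {x} > 0"
    by (rule measure_singleton_pos_if_mu_open[OF outer doubling])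
  moreover have "\<mu> {x} > 0 \<Longrightarrow> open {x}"
    using measure_singleton_eq_0_if_islimpt[OF borel_regular doubling] islimpt_UNIV_iff by force
  ultimately show ?thesis
    by blast
qed

end
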